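(* Let $\Psi$ be a vectorial FQ operation which is Clifford conservative, natural, transposition invariant and orthogonally invariant, and let $\hat p^{[1]}_1,\dots,\hat p^{[1]}_5$ be the first-order coefficients of its first component in the mixed basis. Then $\hat p^{[1]}_1=\hat p^{[1]}_2$ and $\hat p^{[1]}_4=\hat p^{[1]}_5$, and moreover: (a) if $\Psi\circ\Psi=\mathrm{Id}$, then $\hat p^{[1]}_1,\hat p^{[1]}_3,\hat p^{[1]}_4\in\{-1,1\}$; (b) if $\Psi\circ\Psi=\Psi$, then $\hat p^{[1]}_1,\hat p^{[1]}_3,\hat p^{[1]}_4\in\{0,1\}$; (c) if $\Psi\circ\Psi\circ\Psi=\Psi$, then $\hat p^{[1]}_1,\hat p^{[1]}_3,\hat p^{[1]}_4\in\{-1,0,1\}$.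
   Context: Setting. $(Q_1,Q_2)$ is a Clifford system: $Q_1^2=Q_2^2=-1$, $Q_1Q_2=-Q_2Q_1$. $R_1,R_2$ are formal noncommuting infinitesimal variables; one works in the real algebra generated by $Q_1,Q_2,R_1,R_2$ (free apart from the Clifford relations), completed with respect to total degree in $R_1,R_2$, or in extensions of it by further formal infinitesimal elements. Put $A_i=Q_i+R_i$. For $Q$ with $Q^2=-1$ and any $X$ put $X^0_Q=\frac12(X+Q^{-1}XQ)$, $X^1_Q=\frac12(X-Q^{-1}XQ)$. The split variables are $r_1,\dots,r_8$: for $j\in\{1,2\}$, $\iota_1,\iota_2\in\{0,1\}$, $r_{4(j-1)+2\iota_1+\iota_2+1}=((R_jQ_j^{-1})^{\iota_1}_{Q_1})^{\iota_2}_{Q_2}$. A vectorial FQ operation around $(Q_1,Q_2)$ is $\Psi(A_1,A_2)=(f_1(r)Q_1,f_2(r)Q_2)$ with $f_1,f_2$ formal real noncommutative power series in eight variables, identified with this pair of series; the same series can be evaluated relative to any other Clifford system $(Q'_1,Q'_2)$ at $(A'_1,A'_2)$ with $A'_i-Q'_i$ infinitesimal, by forming the split variables of $A'_i-Q'_i$ relative to $(Q'_1,Q'_2)$ and multiplying by $Q'_s$. Clifford conservative: both constant terms equal $1$. Composition: for Clifford conservative $\Psi_1$, $\Psi_2\circ\Psi_1$ is obtained by evaluating $\Psi_2$ (around $(Q_1,Q_2)$) at $\Psi_1(A_1,A_2)$ and expanding in $r_1,\dots,r_8$; $\mathrm{Id}$ is $(A_1,A_2)\mapsto(A_1,A_2)$.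 Mixed basis: $\hat r_1=\frac12(r_2-r_7)$, $\hat r_2=\frac12(r_2+r_7)$, $\hat r_3=\frac12(r_1+r_5)$, $\hat r_4=\frac12(r_1-r_5)$, $\hat r_5=\frac12(r_4-r_8)$, $\hat r_6=\frac12(r_4+r_8)$, $\hat r_7=\frac12(r_3+r_6)$, $\hat r_8=\frac12(r_3-r_6)$; $\hat p^{[s]}_k$ is the coefficient of $\hat r_k$ in $f_s$ rewritten in these variables. Naturality: for every $\theta$ (in an extension algebra) with $\theta X\theta=0$ for all $X$, evaluating $\Psi$ at $((1+\theta)A_1(1-\theta),(1+\theta)A_2(1-\theta))$ gives $(1+\theta)\Psi(A_1,A_2)(1-\theta)$ componentwise. Transposition invariance: $\Psi^{\mathrm{opp}}=\Psi$, where $\Psi^{\mathrm{opp}}$ is obtained by evaluating the series of $\Psi$ at $(A_1,A_2)$ in the opposite algebra (all products, including those forming the split variables and the final multiplication by $Q_s$, taken in reversed order). Orthogonal invariance: with $t$ central, $t^2=0$, and $\mathrm{Rot}_t(B_1,B_2)=(B_1+tB_2,B_2-tB_1)$: $\mathrm{Rot}_t(\Psi_{(Q_1,Q_2)}(A_1,A_2))=\Psi_{\mathrm{Rot}_t(Q_1,Q_2)}(\mathrm{Rot}_t(A_1,A_2))$, the subscript indicating the base Clifford system. *)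

theory Defs
  imports "HOL-Computational_Algebra.Polynomial"
begin

text \<open>
  Model of the (completed) real algebra generated by a Clifford system Q1, Q2
  (Q1^2 = Q2^2 = -1, Q1 Q2 = - Q2 Q1) and free noncommuting formal infinitesimal
  letters.  The letters are R1, R2 (the infinitesimal variables) and Th (a further
  formal element used for naturality).  The subalgebra spanned by 1, Q1, Q2, Q1 Q2
  is the quaternions; since the letters are free, every element is uniquely a
  (possibly infinite) sum of terms  q_0 l_1 q_1 l_2 ... l_n q_n  with q_i among the
  basis 1, Q1, Q2, Q1Q2 (indices 0,1,2,3).  An element is thus the coefficient
  function on keys (letter word, basis-index list of length n+1).  All sums that
  occur are coefficientwise finite, so this is exactly the completion with respect
  to the number of letters.

  Coefficients are taken in real polynomials in a central variable t; elements of
  the algebra proper have constant coefficients.  The extension by a central t with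
  t^2 = 0 is obtained by comparing coefficients of t^0 and t^1 only.
\<close>

datatype letter = LR1 | LR2 | LTh

type_synonym elem = "letter list \<times> nat list \<Rightarrow> real poly"

definition valid_key :: "letter list \<times> nat list \<Rightarrow> bool" where
  "valid_key k \<longleftrightarrow> length (snd k) = Suc (length (fst k)) \<and> (\<forall>i\<in>set (snd k). i < 4)"

text \<open>Multiplication table of the basis 0 = 1, 1 = Q1, 2 = Q2, 3 = Q1 Q2:
  result (sign, index).\<close>
definition qmul :: "nat \<Rightarrow> nat \<Rightarrow> real \<times> nat" where
  "qmul i j =
    (if i = 0 then (1, j) else if j = 0 then (1, i) else if i = j then (-1, 0)
     else if i = 1 \<and> j = 2 then (1, 3) else if i = 2 \<and> j = 1 then (-1, 3)
     else if i = 1 \<and> j = 3 then (-1, 2) else if i = 3 \<and> j = 1 then (1, 2)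
     else if i = 2 \<and> j = 3 then (1, 1) else (-1, 1))"

definition emul :: "elem \<Rightarrow> elem \<Rightarrow> elem" where
  "emul x y = (\<lambda>(w, b). if valid_key (w, b) then
     (\<Sum>k\<le>length w. \<Sum>i<4. \<Sum>j<4.
        if snd (qmul i j) = b ! k
        then [:fst (qmul i j):] * x (take k w, take k b @ [i]) * y (drop k w, j # drop (Suc k) b)
        else 0)
     else 0)"

definition eadd :: "elem \<Rightarrow> elem \<Rightarrow> elem" where
  "eadd x y = (\<lambda>k. x k + y k)"

definition esub :: "elem \<Rightarrow> elem \<Rightarrow> elem" where
  "esub x y = (\<lambda>k. x k - y k)"

definition escale :: "real poly \<Rightarrow> elem \<Rightarrow> elem" where
  "escale c x = (\<lambda>k. c * x k)"

definition eone :: elem where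
  "eone = (\<lambda>(w, b). if w = [] \<and> b = [0] then 1 else 0)"

definition qbasis :: "nat \<Rightarrow> elem" where
  "qbasis i = (\<lambda>(w, b). if w = [] \<and> b = [i] then 1 else 0)"

definition egen :: "letter \<Rightarrow> elem" where
  "egen l = (\<lambda>(w, b). if w = [l] \<and> b = [0, 0] then 1 else 0)"

text \<open>Inverse of an element Q with Q^2 = -1 (elements of Clifford systems): Q^-1 = -Q.\<close>
definition einv :: "elem \<Rightarrow> elem" where
  "einv Q = escale (-1) Q"

text \<open>A formal real noncommutative power series in eight variables r_1..r_8:
  coefficient function on words; the letter k (0 \<le> k < 8) stands for r_(k+1).\<close>
type_synonym ncseries = "nat list \<Rightarrow> real"

text \<open>A vectorial FQ operation, identified with its pair of series (f_1, f_2).\<close>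
type_synonym fqop = "ncseries \<times> ncseries"

text \<open>Everything is parametrised by the multiplication m used (the ordinary one,
  or the reversed one for the opposite algebra).\<close>

definition qpart :: "(elem \<Rightarrow> elem \<Rightarrow> elem) \<Rightarrow> nat \<Rightarrow> elem \<Rightarrow> elem \<Rightarrow> elem" where
  "qpart m \<iota> Q X =
     escale [:1/2:] (if \<iota> = 0 then eadd X (m (m (einv Q) X) Q) else esub X (m (m (einv Q) X) Q))"

text \<open>split variables, 0-indexed: split_vars ... k = r_(k+1), with
  k = 4(j-1) + 2 iota1 + iota2.\<close>
definition split_vars ::
  "(elem \<Rightarrow> elem \<Rightarrow> elem) \<Rightarrow> elem \<Rightarrow> elem \<Rightarrow> elem \<Rightarrow> elem \<Rightarrow> nat \<Rightarrow> elem" where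
  "split_vars m Q1 Q2 A1 A2 k =
     (let Qj = (if k div 4 = 0 then Q1 else Q2);
          Aj = (if k div 4 = 0 then A1 else A2);
          Y = m (esub Aj Qj) (einv Qj)
      in qpart m (k mod 2) Q2 (qpart m ((k mod 4) div 2) Q1 Y))"

text \<open>Evaluation of a series at infinitesimal elements r (each term of each r k contains
  at least one letter, so only words u of length at most the number of letters of the key
  contribute to a coefficient: this is the exact formal infinite sum).\<close>
definition ser_eval :: "(elem \<Rightarrow> elem \<Rightarrow> elem) \<Rightarrow> ncseries \<Rightarrow> (nat \<Rightarrow> elem) \<Rightarrow> elem" where
  "ser_eval m f r = (\<lambda>(w, b).
     \<Sum>u\<in>{u. set u \<subseteq> {0..<8} \<and> length u \<le> length w}. [:f u:] * foldr m (map r u) eone (w, b))"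

definition psi_eval ::
  "(elem \<Rightarrow> elem \<Rightarrow> elem) \<Rightarrow> fqop \<Rightarrow> elem \<Rightarrow> elem \<Rightarrow> elem \<Rightarrow> elem \<Rightarrow> elem \<times> elem" where
  "psi_eval m \<Psi> Q1 Q2 A1 A2 =
     (let r = split_vars m Q1 Q2 A1 A2
      in (m (ser_eval m (fst \<Psi>) r) Q1, m (ser_eval m (snd \<Psi>) r) Q2))"

definition UQ1 :: elem where "UQ1 = qbasis 1"
definition UQ2 :: elem where "UQ2 = qbasis 2"
definition UA1 :: elem where "UA1 = eadd UQ1 (egen LR1)"
definition UA2 :: elem where "UA2 = eadd UQ2 (egen LR2)"

definition psi_apply :: "fqop \<Rightarrow> elem \<times> elem \<Rightarrow> elem \<times> elem" where
  "psi_apply \<Psi> B = psi_eval emul \<Psi> UQ1 UQ2 (fst B) (snd B)"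

definition clifford_conservative :: "fqop \<Rightarrow> bool" where
  "clifford_conservative \<Psi> \<longleftrightarrow> fst \<Psi> [] = 1 \<and> snd \<Psi> [] = 1"

text \<open>Naturality, with the universal theta: the letter Th modulo the relations
  theta X theta = 0 for all X, i.e. modulo all terms with at least two Th letters.\<close>
definition theta :: elem where "theta = egen LTh"

definition th_conj :: "elem \<Rightarrow> elem" where
  "th_conj X = emul (emul (eadd eone theta) X) (esub eone theta)"

definition trunc_th :: "elem \<Rightarrow> elem" where
  "trunc_th x = (\<lambda>(w, b). if length (filter (\<lambda>l. l = LTh) w) \<le> 1 then x (w, b) else 0)"

definition natural :: "fqop \<Rightarrow> bool" where
  "natural \<Psi> \<longleftrightarrow>
     (let B = psi_apply \<Psi> (UA1, UA2);
          C = psi_apply \<Psi> (th_conj UA1, th_conj UA2)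
      in trunc_th (fst C) = trunc_th (th_conj (fst B)) \<and>
         trunc_th (snd C) = trunc_th (th_conj (snd B)))"

text \<open>Transposition invariance: evaluation in the opposite algebra (all products reversed).\<close>
definition transposition_invariant :: "fqop \<Rightarrow> bool" where
  "transposition_invariant \<Psi> \<longleftrightarrow>
     psi_eval (\<lambda>x y. emul y x) \<Psi> UQ1 UQ2 UA1 UA2 = psi_eval emul \<Psi> UQ1 UQ2 UA1 UA2"

text \<open>Orthogonal invariance: central t (the polynomial variable) with t^2 = 0.\<close>
definition tvar :: "real poly" where "tvar = [:0, 1:]"

definition rot_t :: "elem \<times> elem \<Rightarrow> elem \<times> elem" where
  "rot_t B = (eadd (fst B) (escale tvar (snd B)), esub (snd B) (escale tvar (fst B)))"

definition eq_mod_t2 :: "elem \<Rightarrow> elem \<Rightarrow> bool" where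
  "eq_mod_t2 x y \<longleftrightarrow> (\<forall>k n. n \<le> 1 \<longrightarrow> coeff (x k) n = coeff (y k) n)"

definition orthogonally_invariant :: "fqop \<Rightarrow> bool" where
  "orthogonally_invariant \<Psi> \<longleftrightarrow>
     (let L = rot_t (psi_eval emul \<Psi> UQ1 UQ2 UA1 UA2);
          Q' = rot_t (UQ1, UQ2);
          A' = rot_t (UA1, UA2);
          R = psi_eval emul \<Psi> (fst Q') (snd Q') (fst A') (snd A')
      in eq_mod_t2 (fst L) (fst R) \<and> eq_mod_t2 (snd L) (snd R))"

text \<open>hat_r_k = sum_j hat_def k j * r_j (1-indexed), as in the paper.\<close>
definition hat_def :: "nat \<Rightarrow> nat \<Rightarrow> real" where
  "hat_def k j =
    (if k = 1 then (if j = 2 then 1/2 else if j = 7 then -1/2 else 0)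
     else if k = 2 then (if j = 2 then 1/2 else if j = 7 then 1/2 else 0)
     else if k = 3 then (if j = 1 then 1/2 else if j = 5 then 1/2 else 0)
     else if k = 4 then (if j = 1 then 1/2 else if j = 5 then -1/2 else 0)
     else if k = 5 then (if j = 4 then 1/2 else if j = 8 then -1/2 else 0)
     else if k = 6 then (if j = 4 then 1/2 else if j = 8 then 1/2 else 0)
     else if k = 7 then (if j = 3 then 1/2 else if j = 6 then 1/2 else 0)
     else if k = 8 then (if j = 3 then 1/2 else if j = 6 then -1/2 else 0)
     else 0)"

text \<open>Inverse change of variables: r_j = sum_k r_in_hat j k * hat_r_k.\<close>
definition r_in_hat :: "nat \<Rightarrow> nat \<Rightarrow> real" where
  "r_in_hat j k =
    (if j = 2 then (if k = 1 \<or> k = 2 then 1 else 0)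
     else if j = 7 then (if k = 2 then 1 else if k = 1 then -1 else 0)
     else if j = 1 then (if k = 3 \<or> k = 4 then 1 else 0)
     else if j = 5 then (if k = 3 then 1 else if k = 4 then -1 else 0)
     else if j = 4 then (if k = 5 \<or> k = 6 then 1 else 0)
     else if j = 8 then (if k = 6 then 1 else if k = 5 then -1 else 0)
     else if j = 3 then (if k = 7 \<or> k = 8 then 1 else 0)
     else if j = 6 then (if k = 7 then 1 else if k = 8 then -1 else 0)
     else 0)"


text \<open>Coefficient of hat_r_k (1 \<le> k \<le> 8) in the series f rewritten in the mixed variables:
  a word u (0-indexed letters) rewrites to a sum of hatted words of the same length.\<close>
definition mixed_coeff :: "ncseries \<Rightarrow> nat list \<Rightarrow> real" where
  "mixed_coeff f v = (\<Sum>u\<in>{u. set u \<subseteq> {0..<8} \<and> length u = length v}.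
      f u * (\<Prod>i<length v. r_in_hat (Suc (u ! i)) (Suc (v ! i))))"

definition hat_p :: "ncseries \<Rightarrow> nat \<Rightarrow> real" where
  "hat_p f k = mixed_coeff f [k - 1]"

end

theory Submission
  imports Defs
begin

text \<open>
  Only the coefficients of one-letter words matter. Comparing such coefficients (and, for the
  rotation, their parts linear in t) in the identities expressing transposition invariance,
  naturality and orthogonal invariance gives linear relations between the linear coefficients
  of the two series of \<open>\<Psi>\<close>. Under these relations the linear part of \<open>\<Psi>\<close>, acting on the
  coefficients of the words \<open>q\<^sub>a R\<^sub>1 q\<^sub>b\<close> of a pair \<open>(B\<^sub>1, B\<^sub>2)\<close>, has three left eigenvectors
  with eigenvalues \<open>hat_p (fst \<Psi>) k\<close>, \<open>k = 1, 3, 4\<close>, each taking the value 1 at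
  \<open>(A\<^sub>1, A\<^sub>2)\<close>. Evaluating them along the orbit of \<open>(A\<^sub>1, A\<^sub>2)\<close> turns \<open>\<Psi>\<^sup>2 = Id\<close>,
  \<open>\<Psi>\<^sup>2 = \<Psi>\<close> and \<open>\<Psi>\<^sup>3 = \<Psi>\<close> into \<open>\<lambda>\<^sup>2 = 1\<close>, \<open>\<lambda>\<^sup>2 = \<lambda>\<close> and \<open>\<lambda>\<^sup>3 = \<lambda>\<close> for each eigenvalue.
\<close>

definition coeff0 :: "real poly \<Rightarrow> real" where "coeff0 p = coeff p 0"
definition coeff1 :: "real poly \<Rightarrow> real" where "coeff1 p = coeff p 1"

lemma coeff0_simps [simp]:
  "coeff0 (p + q) = coeff0 p + coeff0 q" "coeff0 (p - q) = coeff0 p - coeff0 q"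
  "coeff0 (- p) = - coeff0 p" "coeff0 (p * q) = coeff0 p * coeff0 q"
  "coeff0 [:c:] = c" "coeff0 (smult c p) = c * coeff0 p"
  "coeff0 0 = 0" "coeff0 1 = 1" "coeff0 (-1) = -1" "coeff0 tvar = 0"
  by (simp_all add: coeff0_def coeff_mult tvar_def)

lemma coeff1_simps [simp]:
  "coeff1 (p + q) = coeff1 p + coeff1 q" "coeff1 (p - q) = coeff1 p - coeff1 q"
  "coeff1 (- p) = - coeff1 p" "coeff1 (p * q) = coeff0 p * coeff1 q + coeff1 p * coeff0 q"
  "coeff1 [:c:] = 0" "coeff1 (smult c p) = c * coeff1 p"
  "coeff1 0 = 0" "coeff1 1 = 0" "coeff1 (-1) = 0" "coeff1 tvar = 1"
  by (simp_all add: coeff0_def coeff1_def coeff_mult tvar_def)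

lemma coeff01_sum_if [simp]:
  "coeff0 (sum f A) = (\<Sum>a\<in>A. coeff0 (f a))" "coeff1 (sum f A) = (\<Sum>a\<in>A. coeff1 (f a))"
  "coeff0 (if c then p else 0) = (if c then coeff0 p else 0)"
  "coeff1 (if c then p else 0) = (if c then coeff1 p else 0)"
  by (simp_all add: coeff0_def coeff1_def coeff_sum)

text \<open>\<open>const0 x i\<close> and \<open>lin0 x l i j\<close> are the coefficients of \<open>q\<^sub>i\<close> and of \<open>q\<^sub>i l q\<^sub>j\<close> in \<open>x\<close>,
  taken at \<open>t\<^sup>0\<close>; \<open>const1\<close> and \<open>lin1\<close> are the same coefficients at \<open>t\<^sup>1\<close>.\<close>

definition const0 :: "elem \<Rightarrow> nat \<Rightarrow> real" where "const0 x i = coeff0 (x ([], [i]))"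
definition const1 :: "elem \<Rightarrow> nat \<Rightarrow> real" where "const1 x i = coeff1 (x ([], [i]))"
definition lin0 :: "elem \<Rightarrow> letter \<Rightarrow> nat \<Rightarrow> nat \<Rightarrow> real" where
  "lin0 x l i j = coeff0 (x ([l], [i, j]))"
definition lin1 :: "elem \<Rightarrow> letter \<Rightarrow> nat \<Rightarrow> nat \<Rightarrow> real" where
  "lin1 x l i j = coeff1 (x ([l], [i, j]))"

definition qsum :: "(nat \<Rightarrow> real) \<Rightarrow> real" where "qsum f = f 0 + f 1 + f 2 + f 3"

definition vsum :: "(nat \<Rightarrow> real) \<Rightarrow> real" where
  "vsum f = f 0 + f 1 + f 2 + f 3 + f 4 + f 5 + f 6 + f 7"

lemma sum_lessThan_4: "(\<Sum>i<4. f i) = qsum f"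
  by (simp add: qsum_def eval_nat_numeral lessThan_Suc add_ac)

lemma sum_lessThan_8: "(\<Sum>i<8. f i) = vsum f"
  by (simp add: vsum_def eval_nat_numeral lessThan_Suc add_ac)

lemma sum_atMost_0_1: "(\<Sum>k\<le>(0::nat). f k) = f 0" "(\<Sum>k\<le>Suc 0. f k) = f 0 + f 1"
  by simp_all

lemma const0_emul:
  assumes "b < 4"
  shows "const0 (emul x y) b =
    qsum (\<lambda>i. qsum (\<lambda>j. if snd (qmul i j) = b then fst (qmul i j) * (const0 x i * const0 y j) else 0))"
proof -
  have "valid_key ([], [b])" using assms by (simp add: valid_key_def)
  then show ?thesis
    unfolding sum_lessThan_4[symmetric] emul_def const0_def
    by (simp only: split if_True prod.case coeff01_sum_if coeff0_simps sum_atMost_0_1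
        list.size take_0 drop_0 nth_Cons_0 drop_Suc_Cons append.simps mult.assoc)
qed

lemma const1_emul:
  assumes "b < 4"
  shows "const1 (emul x y) b =
    qsum (\<lambda>i. qsum (\<lambda>j. if snd (qmul i j) = b
      then fst (qmul i j) * (const0 x i * const1 y j + const1 x i * const0 y j) else 0))"
proof -
  have "valid_key ([], [b])" using assms by (simp add: valid_key_def)
  then show ?thesis
    unfolding sum_lessThan_4[symmetric] emul_def const0_def const1_def
    by (simp only: split if_True prod.case coeff01_sum_if coeff0_simps coeff1_simps sum_atMost_0_1
        list.size take_0 drop_0 nth_Cons_0 drop_Suc_Cons append.simps mult_zero_left mult_zero_right
        add_0_left add_0_right distrib_left mult.assoc)
qed

lemma lin0_emul:
  assumes "a < 4" "b < 4"
  shows "lin0 (emul x y) l a b =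
    qsum (\<lambda>i. qsum (\<lambda>j. if snd (qmul i j) = a then fst (qmul i j) * (const0 x i * lin0 y l j b) else 0)) +
    qsum (\<lambda>i. qsum (\<lambda>j. if snd (qmul i j) = b then fst (qmul i j) * (lin0 x l a i * const0 y j) else 0))"
proof -
  have "valid_key ([l], [a, b])" using assms by (simp add: valid_key_def)
  then show ?thesis
    unfolding sum_lessThan_4[symmetric] emul_def const0_def lin0_def
    by (simp only: split if_True prod.case coeff01_sum_if coeff0_simps sum_atMost_0_1 sum.distrib
        list.size take_0 drop_0 nth_Cons_0 nth_Cons_Suc drop_Suc_Cons take_Suc_Cons append.simps
        mult.assoc add_0_left add_0_right One_nat_def)
qed

lemma lin1_emul:
  assumes "a < 4" "b < 4"
  shows "lin1 (emul x y) l a b =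
    qsum (\<lambda>i. qsum (\<lambda>j. if snd (qmul i j) = a
      then fst (qmul i j) * (const0 x i * lin1 y l j b + const1 x i * lin0 y l j b) else 0)) +
    qsum (\<lambda>i. qsum (\<lambda>j. if snd (qmul i j) = b
      then fst (qmul i j) * (lin0 x l a i * const1 y j + lin1 x l a i * const0 y j) else 0))"
proof -
  have "valid_key ([l], [a, b])" using assms by (simp add: valid_key_def)
  then show ?thesis
    unfolding sum_lessThan_4[symmetric] emul_def const0_def lin0_def const1_def lin1_def
    by (simp only: split if_True prod.case coeff01_sum_if coeff0_simps coeff1_simps sum_atMost_0_1
        sum.distrib list.size take_0 drop_0 nth_Cons_0 nth_Cons_Suc drop_Suc_Cons take_Suc_Cons
        append.simps mult.assoc mult_zero_left mult_zero_right add_0_left add_0_right distrib_left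
        One_nat_def)
qed

lemma coeffs_eadd [simp]:
  "const0 (eadd x y) i = const0 x i + const0 y i" "const1 (eadd x y) i = const1 x i + const1 y i"
  "lin0 (eadd x y) l a b = lin0 x l a b + lin0 y l a b"
  "lin1 (eadd x y) l a b = lin1 x l a b + lin1 y l a b"
  by (simp_all add: const0_def const1_def lin0_def lin1_def eadd_def)

lemma coeffs_esub [simp]:
  "const0 (esub x y) i = const0 x i - const0 y i" "const1 (esub x y) i = const1 x i - const1 y i"
  "lin0 (esub x y) l a b = lin0 x l a b - lin0 y l a b"
  "lin1 (esub x y) l a b = lin1 x l a b - lin1 y l a b"
  by (simp_all add: const0_def const1_def lin0_def lin1_def esub_def)

lemma coeffs_escale [simp]:
  "const0 (escale c x) i = coeff0 c * const0 x i"
  "const1 (escale c x) i = coeff0 c * const1 x i + coeff1 c * const0 x i"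
  "lin0 (escale c x) l a b = coeff0 c * lin0 x l a b"
  "lin1 (escale c x) l a b = coeff0 c * lin1 x l a b + coeff1 c * lin0 x l a b"
  by (simp_all add: const0_def const1_def lin0_def lin1_def escale_def)

lemma coeffs_generators [simp]:
  "const0 (qbasis k) i = (if k = i then 1 else 0)" "const1 (qbasis k) i = 0"
  "lin0 (qbasis k) l a b = 0" "lin1 (qbasis k) l a b = 0"
  "const0 eone i = (if i = 0 then 1 else 0)" "const1 eone i = 0"
  "lin0 eone l a b = 0" "lin1 eone l a b = 0"
  "const0 (egen g) i = 0" "const1 (egen g) i = 0"
  "lin0 (egen g) l a b = (if l = g \<and> a = 0 \<and> b = 0 then 1 else 0)" "lin1 (egen g) l a b = 0"
  by (auto simp: const0_def const1_def lin0_def lin1_def qbasis_def eone_def egen_def coeff0_def coeff1_def)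

lemma eone_eq_qbasis_0: "eone = qbasis 0"
  by (simp add: eone_def qbasis_def)

lemma emul_eadd_right: "emul x (eadd y z) = eadd (emul x y) (emul x z)"
  by (auto simp: emul_def eadd_def fun_eq_iff distrib_left sum.distrib[symmetric] intro!: sum.cong)

lemma emul_eadd_left: "emul (eadd x y) z = eadd (emul x z) (emul y z)"
  by (auto simp: emul_def eadd_def fun_eq_iff algebra_simps sum.distrib[symmetric] intro!: sum.cong)

lemma emul_esub_right: "emul x (esub y z) = esub (emul x y) (emul x z)"
  by (simp add: emul_def esub_def fun_eq_iff split_def right_diff_distrib sum_subtractf[symmetric]
      if_distrib cong: if_cong)

lemma emul_esub_left: "emul (esub x y) z = esub (emul x z) (emul y z)"
  by (simp add: emul_def esub_def fun_eq_iff split_def left_diff_distrib smult_diff_right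
      sum_subtractf[symmetric] if_distrib[of "\<lambda>p. p - _"] cong: if_cong)

lemma emul_escale_right: "emul x (escale c y) = escale c (emul x y)"
  by (auto simp: emul_def escale_def fun_eq_iff algebra_simps sum_distrib_left intro!: sum.cong)

lemma emul_escale_left: "emul (escale c x) y = escale c (emul x y)"
  by (auto simp: emul_def escale_def fun_eq_iff algebra_simps sum_distrib_left intro!: sum.cong)

lemma lin_emul_tvar_perturbation:
  "lin0 (emul x (eadd y (escale tvar z))) l a b = lin0 (emul x y) l a b"
  "lin1 (emul x (eadd y (escale tvar z))) l a b = lin1 (emul x y) l a b + lin0 (emul x z) l a b"
  "lin0 (emul x (esub y (escale tvar z))) l a b = lin0 (emul x y) l a b"
  "lin1 (emul x (esub y (escale tvar z))) l a b = lin1 (emul x y) l a b - lin0 (emul x z) l a b"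
  "lin0 (emul (eadd y (escale tvar z)) x) l a b = lin0 (emul y x) l a b"
  "lin1 (emul (eadd y (escale tvar z)) x) l a b = lin1 (emul y x) l a b + lin0 (emul z x) l a b"
  "lin0 (emul (esub y (escale tvar z)) x) l a b = lin0 (emul y x) l a b"
  "lin1 (emul (esub y (escale tvar z)) x) l a b = lin1 (emul y x) l a b - lin0 (emul z x) l a b"
  by (simp_all add: emul_eadd_left emul_eadd_right emul_esub_left emul_esub_right
      emul_escale_left emul_escale_right)

lemma less_4_cases: "(k::nat) < 4 \<Longrightarrow> k = 0 \<or> k = 1 \<or> k = 2 \<or> k = 3"
  by auto

text \<open>Multiplication by a basis element permutes the basis up to sign, so each coefficient of
  \<open>q\<^sub>k x\<close> (resp. \<open>x q\<^sub>k\<close>) is a single signed coefficient of \<open>x\<close>.\<close>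

lemma const_emul_qbasis_left:
  assumes "k < 4" "b < 4"
  shows "const0 (emul (qbasis k) x) b = fst (qmul k (snd (qmul k b))) * const0 x (snd (qmul k b))"
    and "const1 (emul (qbasis k) x) b = fst (qmul k (snd (qmul k b))) * const1 x (snd (qmul k b))"
  using less_4_cases[OF assms(1)] less_4_cases[OF assms(2)]
  by (elim disjE; simp add: const0_emul const1_emul qsum_def qmul_def)+

lemma const_emul_qbasis_right:
  assumes "k < 4" "b < 4"
  shows "const0 (emul x (qbasis k)) b = fst (qmul (snd (qmul b k)) k) * const0 x (snd (qmul b k))"
    and "const1 (emul x (qbasis k)) b = fst (qmul (snd (qmul b k)) k) * const1 x (snd (qmul b k))"
  using less_4_cases[OF assms(1)] less_4_cases[OF assms(2)]
  by (elim disjE; simp add: const0_emul const1_emul qsum_def qmul_def)+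

lemma lin_emul_qbasis_left:
  assumes "k < 4" "a < 4" "b < 4"
  shows "lin0 (emul (qbasis k) x) l a b = fst (qmul k (snd (qmul k a))) * lin0 x l (snd (qmul k a)) b"
    and "lin1 (emul (qbasis k) x) l a b = fst (qmul k (snd (qmul k a))) * lin1 x l (snd (qmul k a)) b"
  using less_4_cases[OF assms(1)] less_4_cases[OF assms(2)] less_4_cases[OF assms(3)]
  by (elim disjE; simp add: lin0_emul lin1_emul qsum_def qmul_def)+

lemma lin_emul_qbasis_right:
  assumes "k < 4" "a < 4" "b < 4"
  shows "lin0 (emul x (qbasis k)) l a b = fst (qmul (snd (qmul b k)) k) * lin0 x l a (snd (qmul b k))"
    and "lin1 (emul x (qbasis k)) l a b = fst (qmul (snd (qmul b k)) k) * lin1 x l a (snd (qmul b k))"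
  using less_4_cases[OF assms(1)] less_4_cases[OF assms(2)] less_4_cases[OF assms(3)]
  by (elim disjE; simp add: lin0_emul lin1_emul qsum_def qmul_def)+

lemma const_ser_eval:
  "const0 (ser_eval m f r) i = f [] * const0 eone i" "const1 (ser_eval m f r) i = 0"
proof -
  have "{u. set u \<subseteq> {0..<8::nat} \<and> length u \<le> 0} = {[]}" by auto
  then have "ser_eval m f r ([], [i]) = [:f []:] * eone ([], [i])"
    unfolding ser_eval_def by (simp only: prod.case list.size) simp
  then show "const0 (ser_eval m f r) i = f [] * const0 eone i" "const1 (ser_eval m f r) i = 0"
    by (simp_all add: const0_def const1_def eone_def)
qed

lemma lin_ser_eval:
  "lin0 (ser_eval m f r) l a b = vsum (\<lambda>j. f [j] * lin0 (m (r j) eone) l a b)"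
  "lin1 (ser_eval m f r) l a b = vsum (\<lambda>j. f [j] * lin1 (m (r j) eone) l a b)"
proof -
  have words: "{u. set u \<subseteq> {0..<8} \<and> length u \<le> Suc 0} = insert [] ((\<lambda>j. [j]) ` {..<(8::nat)})"
    by (auto simp: le_Suc_eq length_Suc_conv)
  have inj: "inj_on (\<lambda>j::nat. [j]) A" for A
    by (auto simp: inj_on_def)
  show "lin0 (ser_eval m f r) l a b = vsum (\<lambda>j. f [j] * lin0 (m (r j) eone) l a b)"
    "lin1 (ser_eval m f r) l a b = vsum (\<lambda>j. f [j] * lin1 (m (r j) eone) l a b)"
    unfolding ser_eval_def lin0_def lin1_def sum_lessThan_8[symmetric]
    by (simp_all only: prod.case list.size words add_0 One_nat_def)
      (simp_all add: sum.reindex[OF inj] image_iff eone_def)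
qed

lemmas psi_eval_unfold = psi_apply_def psi_eval_def split_vars_def qpart_def Let_def einv_def
  UQ1_def UQ2_def UA1_def UA2_def

lemmas coeffs_evaluation = const_emul_qbasis_left const_emul_qbasis_right
  lin_emul_qbasis_left lin_emul_qbasis_right qmul_def emul_escale_left emul_escale_right
  const_ser_eval lin_ser_eval vsum_def eone_eq_qbasis_0

lemma transposition_invariant_first_order:
  assumes "transposition_invariant \<Psi>"
  shows "fst \<Psi> [5] = 0 \<and> fst \<Psi> [6] = 0 \<and> snd \<Psi> [1] = 0 \<and> snd \<Psi> [2] = 0"
proof -
  have "psi_eval (\<lambda>x y. emul y x) \<Psi> UQ1 UQ2 UA1 UA2 = psi_eval emul \<Psi> UQ1 UQ2 UA1 UA2"
    using assms by (simp add: transposition_invariant_def)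
  then have "lin0 (fst (psi_eval (\<lambda>x y. emul y x) \<Psi> UQ1 UQ2 UA1 UA2)) LR2 a b =
      lin0 (fst (psi_eval emul \<Psi> UQ1 UQ2 UA1 UA2)) LR2 a b"
    "lin0 (snd (psi_eval (\<lambda>x y. emul y x) \<Psi> UQ1 UQ2 UA1 UA2)) LR1 a b =
      lin0 (snd (psi_eval emul \<Psi> UQ1 UQ2 UA1 UA2)) LR1 a b" for a b
    by simp_all
  from this[of 0 3] this[of 1 2] show ?thesis
    by (simp add: psi_eval_unfold coeffs_evaluation)
qed

lemma lin0_th_conj:
  assumes "a < 4" "b < 4"
  shows "lin0 (th_conj x) LTh a b =
    lin0 x LTh a b + (if a = 0 then const0 x b else 0) - (if b = 0 then const0 x a else 0)"
  using less_4_cases[OF assms(1)] less_4_cases[OF assms(2)]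
  by (elim disjE; simp add: th_conj_def theta_def lin0_emul const0_emul qsum_def qmul_def)

lemma lin0_eq_if_trunc_th_eq: "trunc_th x = trunc_th y \<Longrightarrow> lin0 x LTh a b = lin0 y LTh a b"
  by (drule fun_cong[of _ _ "([LTh], [a, b])"]) (simp add: trunc_th_def lin0_def)

lemma natural_first_order:
  assumes "clifford_conservative \<Psi>" and "natural \<Psi>"
  shows "fst \<Psi> [2] + fst \<Psi> [3] + fst \<Psi> [5] + fst \<Psi> [7] = 2
    \<and> fst \<Psi> [2] = fst \<Psi> [3] + fst \<Psi> [5] + fst \<Psi> [7]
    \<and> snd \<Psi> [2] + snd \<Psi> [3] + snd \<Psi> [5] + snd \<Psi> [7] = 2
    \<and> snd \<Psi> [2] + snd \<Psi> [3] + snd \<Psi> [7] = snd \<Psi> [5]"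
proof -
  have constant_terms: "fst \<Psi> [] = 1" "snd \<Psi> [] = 1"
    using assms(1) by (simp_all add: clifford_conservative_def)
  have th: "trunc_th (fst (psi_apply \<Psi> (th_conj UA1, th_conj UA2))) =
      trunc_th (th_conj (fst (psi_apply \<Psi> (UA1, UA2))))"
    "trunc_th (snd (psi_apply \<Psi> (th_conj UA1, th_conj UA2))) =
      trunc_th (th_conj (snd (psi_apply \<Psi> (UA1, UA2))))"
    using assms(2) by (simp_all add: natural_def Let_def)
  show ?thesis
    using lin0_eq_if_trunc_th_eq[OF th(1), of 0 1] lin0_eq_if_trunc_th_eq[OF th(1), of 2 3]
      lin0_eq_if_trunc_th_eq[OF th(2), of 0 2] lin0_eq_if_trunc_th_eq[OF th(2), of 1 3]
    by (simp add: lin0_th_conj psi_eval_unfold coeffs_evaluation constant_terms)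
qed

lemma lin1_eq_if_eq_mod_t2: "eq_mod_t2 x y \<Longrightarrow> lin1 x l a b = lin1 y l a b"
  by (simp add: eq_mod_t2_def lin1_def coeff1_def)

lemma orthogonally_invariant_first_order:
  assumes "orthogonally_invariant \<Psi>"
  shows "fst \<Psi> [4] + fst \<Psi> [5] + fst \<Psi> [6] + fst \<Psi> [7] = snd \<Psi> [0] + snd \<Psi> [1] + snd \<Psi> [2] + snd \<Psi> [3]
    \<and> 2 * fst \<Psi> [0] + fst \<Psi> [6] + fst \<Psi> [7] + snd \<Psi> [2] + snd \<Psi> [3] =
      2 * fst \<Psi> [3] + fst \<Psi> [4] + fst \<Psi> [5] + snd \<Psi> [0] + snd \<Psi> [1]
    \<and> snd \<Psi> [4] + snd \<Psi> [5] + snd \<Psi> [6] + snd \<Psi> [7] = fst \<Psi> [0] + fst \<Psi> [1] + fst \<Psi> [2] + fst \<Psi> [3]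
    \<and> fst \<Psi> [0] + fst \<Psi> [1] + 2 * fst \<Psi> [7] + snd \<Psi> [4] + snd \<Psi> [5] =
      fst \<Psi> [2] + fst \<Psi> [3] + 2 * fst \<Psi> [4] + snd \<Psi> [6] + snd \<Psi> [7]
    \<and> fst \<Psi> [0] + fst \<Psi> [1] + 2 * snd \<Psi> [3] + snd \<Psi> [4] + snd \<Psi> [5] =
      fst \<Psi> [2] + fst \<Psi> [3] + 2 * snd \<Psi> [0] + snd \<Psi> [6] + snd \<Psi> [7]"
proof -
  let ?L = "rot_t (psi_eval emul \<Psi> UQ1 UQ2 UA1 UA2)"
  let ?R = "psi_eval emul \<Psi> (fst (rot_t (UQ1, UQ2))) (snd (rot_t (UQ1, UQ2)))
    (fst (rot_t (UA1, UA2))) (snd (rot_t (UA1, UA2)))"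
  have rot: "eq_mod_t2 (fst ?L) (fst ?R)" "eq_mod_t2 (snd ?L) (snd ?R)"
    using assms by (simp_all add: orthogonally_invariant_def Let_def)
  show ?thesis
    using lin1_eq_if_eq_mod_t2[OF rot(1), of LR1 0 3] lin1_eq_if_eq_mod_t2[OF rot(1), of LR1 1 2]
      lin1_eq_if_eq_mod_t2[OF rot(1), of LR2 0 0] lin1_eq_if_eq_mod_t2[OF rot(1), of LR2 1 1]
      lin1_eq_if_eq_mod_t2[OF rot(2), of LR1 1 1]
    by (simp add: rot_t_def psi_eval_unfold coeffs_evaluation lin_emul_tvar_perturbation)
qed

definition first_order_relations :: "fqop \<Rightarrow> bool" where
  "first_order_relations \<Psi> \<longleftrightarrow>
    fst \<Psi> [5] = 0 \<and> fst \<Psi> [6] = 0 \<and> fst \<Psi> [3] = fst \<Psi> [0] - fst \<Psi> [4] + fst \<Psi> [7] \<and>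
    snd \<Psi> [0] = fst \<Psi> [4] \<and> snd \<Psi> [3] = fst \<Psi> [7] \<and> snd \<Psi> [4] = fst \<Psi> [0] \<and>
    snd \<Psi> [7] = fst \<Psi> [0] - fst \<Psi> [4] + fst \<Psi> [7]"

lemma first_order_relations_if_invariant:
  assumes "clifford_conservative \<Psi>" and "natural \<Psi>"
    and "transposition_invariant \<Psi>" and "orthogonally_invariant \<Psi>"
  shows "first_order_relations \<Psi>"
  using natural_first_order[OF assms(1,2)] transposition_invariant_first_order[OF assms(3)]
    orthogonally_invariant_first_order[OF assms(4)]
  unfolding first_order_relations_def by (elim conjE) (intro conjI; linarith)

lemma hat_p_first_order:
  "hat_p f 1 = f [1] - f [6]" "hat_p f 2 = f [1] + f [6]" "hat_p f 3 = f [0] + f [4]"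
  "hat_p f 4 = f [0] - f [4]" "hat_p f 5 = f [3] - f [7]"
proof -
  have words: "{u. set u \<subseteq> {0..<8} \<and> length u = length [k - 1]} = (\<lambda>j. [j]) ` {..<(8::nat)}" for k
    by (auto simp: length_Suc_conv)
  have inj: "inj_on (\<lambda>j::nat. [j]) A" for A
    by (auto simp: inj_on_def)
  have "hat_p f k = vsum (\<lambda>j. f [j] * r_in_hat (Suc j) k)" if "k \<ge> 1" for k
    unfolding hat_p_def mixed_coeff_def words using that by (simp add: sum.reindex[OF inj] sum_lessThan_8)
  then show "hat_p f 1 = f [1] - f [6]" "hat_p f 2 = f [1] + f [6]" "hat_p f 3 = f [0] + f [4]"
    "hat_p f 4 = f [0] - f [4]" "hat_p f 5 = f [3] - f [7]"
    by (simp_all add: vsum_def r_in_hat_def)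
qed

text \<open>Left eigenvectors of the first-order action of \<open>\<Psi>\<close> on the coefficients of
  \<open>q\<^sub>a R\<^sub>1 q\<^sub>b\<close> in \<open>(B\<^sub>1, B\<^sub>2)\<close>, for the eigenvalues \<open>hat_p (fst \<Psi>) k\<close>.\<close>

definition eigen_coord :: "nat \<Rightarrow> elem \<times> elem \<Rightarrow> real" where
  "eigen_coord k B =
    (if k = 1 then lin0 (fst B) LR1 0 0 - lin0 (fst B) LR1 1 1 - lin0 (fst B) LR1 2 2 - lin0 (fst B) LR1 3 3
     else if k = 3 then
       lin0 (fst B) LR1 0 0 - lin0 (fst B) LR1 1 1 + lin0 (fst B) LR1 2 2 + lin0 (fst B) LR1 3 3
       - lin0 (snd B) LR1 0 3 - lin0 (snd B) LR1 1 2 - lin0 (snd B) LR1 2 1 + lin0 (snd B) LR1 3 0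
     else lin0 (fst B) LR1 0 0 + lin0 (fst B) LR1 3 3 + lin0 (snd B) LR1 0 3 - lin0 (snd B) LR1 3 0)"

lemma eigen_coord_psi_apply:
  assumes "first_order_relations \<Psi>" and "k \<in> {1, 3, 4}"
  shows "eigen_coord k (psi_apply \<Psi> B) = hat_p (fst \<Psi>) k * eigen_coord k B"
proof -
  have relations: "fst \<Psi> [5] = 0" "fst \<Psi> [6] = 0" "fst \<Psi> [3] = fst \<Psi> [0] - fst \<Psi> [4] + fst \<Psi> [7]"
    "snd \<Psi> [0] = fst \<Psi> [4]" "snd \<Psi> [3] = fst \<Psi> [7]" "snd \<Psi> [4] = fst \<Psi> [0]"
    "snd \<Psi> [7] = fst \<Psi> [0] - fst \<Psi> [4] + fst \<Psi> [7]"
    using assms(1) by (simp_all add: first_order_relations_def)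
  have "k = 1 \<or> k = 3 \<or> k = 4"
    using assms(2) by blast
  then show ?thesis
    by (elim disjE; simp only: hat_p_first_order;
        simp add: eigen_coord_def relations psi_eval_unfold coeffs_evaluation field_simps)
qed

lemma eigen_coord_UA: "k \<in> {1, 3, 4} \<Longrightarrow> eigen_coord k (UA1, UA2) = 1"
  by (auto simp: eigen_coord_def UA1_def UA2_def UQ1_def UQ2_def)

lemma real_power_eq_cases:
  fixes x :: real
  shows "x ^ 2 = 1 \<Longrightarrow> x \<in> {-1, 1}" and "x ^ 2 = x \<Longrightarrow> x \<in> {0, 1}"
    and "x ^ 3 = x \<Longrightarrow> x \<in> {-1, 0, 1}"
proof -
  show "x ^ 2 = 1 \<Longrightarrow> x \<in> {-1, 1}"
    by (auto simp: power2_eq_1_iff)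
  show "x ^ 2 = x \<Longrightarrow> x \<in> {0, 1}"
    by (auto simp: power2_eq_square)
  have "x ^ 3 - x = x * (x - 1) * (x + 1)"
    by (simp add: algebra_simps power3_eq_cube)
  then show "x ^ 3 = x \<Longrightarrow> x \<in> {-1, 0, 1}"
    by auto
qed

theorem mainTheorem13:
  fixes \<Psi> :: fqop
  assumes "clifford_conservative \<Psi>"
    and "natural \<Psi>"
    and "transposition_invariant \<Psi>"
    and "orthogonally_invariant \<Psi>"
  shows "hat_p (fst \<Psi>) 1 = hat_p (fst \<Psi>) 2 \<and> hat_p (fst \<Psi>) 4 = hat_p (fst \<Psi>) 5
    \<and> (psi_apply \<Psi> (psi_apply \<Psi> (UA1, UA2)) = (UA1, UA2) \<longrightarrow>
         (\<forall>k\<in>{1, 3, 4}. hat_p (fst \<Psi>) k \<in> {-1, 1}))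
    \<and> (psi_apply \<Psi> (psi_apply \<Psi> (UA1, UA2)) = psi_apply \<Psi> (UA1, UA2) \<longrightarrow>
         (\<forall>k\<in>{1, 3, 4}. hat_p (fst \<Psi>) k \<in> {0, 1}))
    \<and> (psi_apply \<Psi> (psi_apply \<Psi> (psi_apply \<Psi> (UA1, UA2))) = psi_apply \<Psi> (UA1, UA2) \<longrightarrow>
         (\<forall>k\<in>{1, 3, 4}. hat_p (fst \<Psi>) k \<in> {-1, 0, 1}))"
proof (intro conjI impI ballI)
  have relations: "first_order_relations \<Psi>"
    using first_order_relations_if_invariant[OF assms] .
  then show "hat_p (fst \<Psi>) 1 = hat_p (fst \<Psi>) 2" "hat_p (fst \<Psi>) 4 = hat_p (fst \<Psi>) 5"
    by (simp_all add: hat_p_first_order first_order_relations_def del: One_nat_def)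
  fix k :: nat
  assume k: "k \<in> {1, 3, 4}"
  let ?A = "(UA1, UA2)" and ?p = "hat_p (fst \<Psi>) k"
  have start: "eigen_coord k ?A = 1"
    and step: "\<And>B. eigen_coord k (psi_apply \<Psi> B) = ?p * eigen_coord k B"
    using eigen_coord_UA[OF k] eigen_coord_psi_apply[OF relations k] by simp_all
  show "?p \<in> {-1, 1}" if "psi_apply \<Psi> (psi_apply \<Psi> ?A) = ?A"
    using arg_cong[OF that, of "eigen_coord k"]
    by (intro real_power_eq_cases) (simp add: step start power2_eq_square)
  show "?p \<in> {0, 1}" if "psi_apply \<Psi> (psi_apply \<Psi> ?A) = psi_apply \<Psi> ?A"
    using arg_cong[OF that, of "eigen_coord k"]
    by (intro real_power_eq_cases) (simp add: step start power2_eq_square)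
  show "?p \<in> {-1, 0, 1}" if "psi_apply \<Psi> (psi_apply \<Psi> (psi_apply \<Psi> ?A)) = psi_apply \<Psi> ?A"
    using arg_cong[OF that, of "eigen_coord k"]
    by (intro real_power_eq_cases) (simp add: step start power3_eq_cube)
qed

end
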